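(* Let $\omega:\mathbb N\to[1,\infty)$ be an unbounded weight on $\mathbb N_{\min}$. Then $(\ell^1_\omega(\mathbb N_{\min}),M_2(\mathbb C))$ is not a uniformly AMNM pair.
   Context: $\mathbb N_{\min}$ is the semilattice $\mathbb N$ with product $\min$; every $\omega:\mathbb N\to[1,\infty)$ is a submultiplicative weight on it. $\ell^1_\omega(\mathbb N_{\min})$ is the Banach space of $a:\mathbb N\to\mathbb C$ with $\|a\|=\sum_n|a(n)|\omega(n)<\infty$, with convolution $\delta_m*\delta_n=\delta_{\min(m,n)}$. $M_2(\mathbb C)$ has the operator norm. For a bounded linear $T:A\to B$ between Banach algebras, $\operatorname{def}(T)=\sup\{\|T(xy)-T(x)T(y)\|:\|x\|,\|y\|\le1\}$ and $\operatorname{Mult}(A,B)$ is the set of bounded multiplicative linear maps (including $0$). $(A,B)$ is a uniformly AMNM pair if for every $\varepsilon>0$ there is $\delta>0$ such that every bounded linear $T:A\to B$ with $\operatorname{def}(T)\le\delta$ satisfies $\operatorname{dist}(T,\operatorname{Mult}(A,B))\le\varepsilon$ in operator norm. *)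

theory Defs
  imports "HOL-Analysis.Analysis"
begin

definition l1w :: "(nat \<Rightarrow> real) \<Rightarrow> (nat \<Rightarrow> complex) set" where
  "l1w \<omega> = {a. summable (\<lambda>n. cmod (a n) * \<omega> n)}"

definition l1w_norm :: "(nat \<Rightarrow> real) \<Rightarrow> (nat \<Rightarrow> complex) \<Rightarrow> real" where
  "l1w_norm \<omega> a = (\<Sum>n. cmod (a n) * \<omega> n)"

text \<open>Convolution on N_min: bilinear extension of delta_m * delta_n = delta_(min m n).\<close>
definition minconv :: "(nat \<Rightarrow> complex) \<Rightarrow> (nat \<Rightarrow> complex) \<Rightarrow> nat \<Rightarrow> complex" where
  "minconv a b k = infsum (\<lambda>(m, n). a m * b n) {(m, n). min m n = k}"

definition m2norm :: "complex^2^2 \<Rightarrow> real" where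
  "m2norm A = onorm (\<lambda>x::complex^2. A *v x)"

definition bounded_lin_l1w :: "(nat \<Rightarrow> real) \<Rightarrow> ((nat \<Rightarrow> complex) \<Rightarrow> complex^2^2) \<Rightarrow> bool" where
  "bounded_lin_l1w \<omega> T \<longleftrightarrow>
     (\<forall>a\<in>l1w \<omega>. \<forall>b\<in>l1w \<omega>. T (\<lambda>n. a n + b n) = T a + T b) \<and>
     (\<forall>a\<in>l1w \<omega>. \<forall>c::complex. T (\<lambda>n. c * a n) = (\<chi> i j. c * T a $ i $ j)) \<and>
     (\<exists>K. \<forall>a\<in>l1w \<omega>. m2norm (T a) \<le> K * l1w_norm \<omega> a)"

definition op_norm_l1w :: "(nat \<Rightarrow> real) \<Rightarrow> ((nat \<Rightarrow> complex) \<Rightarrow> complex^2^2) \<Rightarrow> real" where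
  "op_norm_l1w \<omega> T = Sup {m2norm (T a) | a. a \<in> l1w \<omega> \<and> l1w_norm \<omega> a \<le> 1}"

definition defect :: "(nat \<Rightarrow> real) \<Rightarrow> ((nat \<Rightarrow> complex) \<Rightarrow> complex^2^2) \<Rightarrow> real" where
  "defect \<omega> T = Sup {m2norm (T (minconv a b) - T a ** T b) | a b.
      a \<in> l1w \<omega> \<and> b \<in> l1w \<omega> \<and> l1w_norm \<omega> a \<le> 1 \<and> l1w_norm \<omega> b \<le> 1}"

definition Mult_l1w :: "(nat \<Rightarrow> real) \<Rightarrow> ((nat \<Rightarrow> complex) \<Rightarrow> complex^2^2) set" where
  "Mult_l1w \<omega> = {S. bounded_lin_l1w \<omega> S \<and>
      (\<forall>a\<in>l1w \<omega>. \<forall>b\<in>l1w \<omega>. S (minconv a b) = S a ** S b)}"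

definition dist_Mult :: "(nat \<Rightarrow> real) \<Rightarrow> ((nat \<Rightarrow> complex) \<Rightarrow> complex^2^2) \<Rightarrow> real" where
  "dist_Mult \<omega> T = Inf {op_norm_l1w \<omega> (\<lambda>a. T a - S a) | S. S \<in> Mult_l1w \<omega>}"

definition uniformly_AMNM_l1w_M2 :: "(nat \<Rightarrow> real) \<Rightarrow> bool" where
  "uniformly_AMNM_l1w_M2 \<omega> \<longleftrightarrow>
     (\<forall>\<epsilon>>0. \<exists>\<delta>>0. \<forall>T. bounded_lin_l1w \<omega> T \<and> defect \<omega> T \<le> \<delta> \<longrightarrow> dist_Mult \<omega> T \<le> \<epsilon>)"

end

theory Submission
  imports Defs
begin

(* Fix N, write W = omega N and let t, X > 0.  The functional
     c(a) = t * a N + (sum over k > N of a k)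
   is an "almost character" of l^1_omega(N_min): c(a * b) - c(a) c(b) = (t - t^2) a(N) b(N),
   which is of size at most t / W^2 on the unit ball.  Composing c with the idempotent matrix
   Q = [[1, X], [0, 0]] gives a bounded linear map T a = c(a) Q whose defect is small when W is
   large.  On the other hand, a multiplicative S sends the point masses at m <= n to idempotents
   P, R with P R = R P = P, which forces equal (1,2)-entries as soon as both are nonzero; the
   (1,2)-entries 2W and X of T at the point masses at N and N+1 are chosen so far apart that
   this rules out every S within operator distance 2 of T.  Unboundedness of omega makes W,
   hence the defect bound 4/W, arbitrarily good, so no delta works for epsilon = 1.
   The file first treats the operator norm of 2x2 matrices, point masses, and rank-one maps
   a -> c(a) Q (bounded, with defect controlled by that of c). *)

section \<open>The operator norm on M_2(C)\<close>

lemma norm_axis_one: "norm (axis j (1::complex)) = 1"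
proof -
  have "(\<Sum>i\<in>UNIV. (norm (axis j (1::complex) $ i))\<^sup>2) = 1"
    by (simp add: axis_def if_distrib[of "\<lambda>z. (norm z)^2"] cong: if_cong)
  then show ?thesis by (simp add: norm_vec_def L2_set_def)
qed

lemma m2norm_entry_le: "cmod (A$i$j) \<le> m2norm A"
proof -
  have "cmod (A$i$j) = norm ((A *v axis j 1) $ i)"
    by (simp add: matrix_vector_mult_def axis_def if_distrib[of "\<lambda>z. _ * z"] cong: if_cong)
  also have "\<dots> \<le> norm (A *v axis j 1)" by (rule Finite_Cartesian_Product.norm_nth_le)
  also have "\<dots> \<le> onorm ((*v) A) * norm (axis j (1::complex))"
    by (rule onorm[OF matrix_vector_mul_bounded_linear])
  also have "\<dots> = m2norm A" by (simp add: m2norm_def norm_axis_one)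
  finally show ?thesis .
qed

lemma m2norm_le_entry_sum: "m2norm A \<le> (\<Sum>i\<in>UNIV. \<Sum>j\<in>UNIV. cmod (A$i$j))"
  unfolding m2norm_def
proof (rule onorm_bound)
  show "0 \<le> (\<Sum>i\<in>UNIV. \<Sum>j\<in>UNIV. cmod (A$i$j))" by (intro sum_nonneg) auto
  fix x :: "complex^2"
  have row: "norm ((A *v x)$i) \<le> (\<Sum>j\<in>UNIV. cmod (A$i$j)) * norm x" for i
  proof -
    have "norm ((A *v x)$i) \<le> (\<Sum>j\<in>UNIV. norm (A$i$j * x$j))"
      unfolding matrix_vector_mult_def vec_lambda_beta by (rule norm_sum)
    also have "\<dots> \<le> (\<Sum>j\<in>UNIV. cmod (A$i$j) * norm x)"
      unfolding norm_mult
      by (intro sum_mono mult_left_mono) (auto simp: Finite_Cartesian_Product.norm_nth_le)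
    finally show ?thesis by (simp add: sum_distrib_right)
  qed
  have "norm (A *v x) \<le> (\<Sum>i\<in>UNIV. norm ((A *v x)$i))"
    unfolding norm_vec_def by (rule L2_set_le_sum) auto
  also have "\<dots> \<le> (\<Sum>i\<in>UNIV. (\<Sum>j\<in>UNIV. cmod (A$i$j)) * norm x)"
    by (intro sum_mono row)
  finally show "norm (A *v x) \<le> (\<Sum>i\<in>UNIV. \<Sum>j\<in>UNIV. cmod (A$i$j)) * norm x"
    by (simp add: sum_distrib_right)
qed

lemma m2norm_scaled_le:
  fixes M :: "complex^2^2"
  shows "m2norm (\<chi> i j. z * M$i$j) \<le> cmod z * (\<Sum>i\<in>UNIV. \<Sum>j\<in>UNIV. cmod (M$i$j))"
  using m2norm_le_entry_sum[of "\<chi> i j. z * M$i$j"] by (simp add: norm_mult sum_distrib_left)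

lemma m2norm_diff_le: "m2norm (A - B) \<le> m2norm A + m2norm B"
proof -
  have "m2norm (A - B) = onorm (\<lambda>x. A *v x + - (B *v x))"
    by (simp add: m2norm_def matrix_vector_mult_diff_rdistrib)
  also have "\<dots> \<le> onorm ((*v) A) + onorm (\<lambda>x. - (B *v x))"
    by (intro onorm_triangle bounded_linear_minus matrix_vector_mul_bounded_linear)
  also have "\<dots> = m2norm A + m2norm B"
    by (simp add: m2norm_def onorm_neg)
  finally show ?thesis .
qed

text \<open>Two idempotents with P R = R P = P and nonzero (1,2)-entries have the same (1,2)-entry:
  the trace of each is 1, and expanding (R - P)^2 in the (1,2)-position gives the claim.
  This is the rigidity of multiplicative maps that the construction exploits.\<close>
lemma idempotents_offdiag_eq:
  fixes P R :: "complex^2^2"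
  assumes PP: "P ** P = P" and RR: "R ** R = R" and PR: "P ** R = P" and RP: "R ** P = P"
    and P12: "P$1$2 \<noteq> 0" and R12: "R$1$2 \<noteq> 0"
  shows "P$1$2 = R$1$2"
proof -
  have e: "(M ** M')$1$2 = M$1$1 * M'$1$2 + M$1$2 * M'$2$2" for M M' :: "complex^2^2"
    by (simp add: matrix_matrix_mult_def sum_2)
  have pp: "P$1$1 * P$1$2 + P$1$2 * P$2$2 = P$1$2" using PP e[of P P] by simp
  have rr: "R$1$1 * R$1$2 + R$1$2 * R$2$2 = R$1$2" using RR e[of R R] by simp
  have pr: "P$1$1 * R$1$2 + P$1$2 * R$2$2 = P$1$2" using PR e[of P R] by simp
  have rp: "R$1$1 * P$1$2 + R$1$2 * P$2$2 = P$1$2" using RP e[of R P] by simp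
  have trP: "P$1$1 + P$2$2 = 1"
  proof -
    have "P$1$2 * (P$1$1 + P$2$2 - 1) = 0" using pp by (simp add: algebra_simps)
    then show ?thesis using P12 by simp
  qed
  have trR: "R$1$1 + R$2$2 = 1"
  proof -
    have "R$1$2 * (R$1$1 + R$2$2 - 1) = 0" using rr by (simp add: algebra_simps)
    then show ?thesis using R12 by simp
  qed
  have "(R$1$2 - P$1$2) * ((R$1$1 + R$2$2) - (P$1$1 + P$2$2)) =
     (R$1$1 * R$1$2 + R$1$2 * R$2$2) - (P$1$1 * R$1$2 + P$1$2 * R$2$2)
     - (R$1$1 * P$1$2 + R$1$2 * P$2$2) + (P$1$1 * P$1$2 + P$1$2 * P$2$2)"
    by (simp add: algebra_simps)
  also have "\<dots> = R$1$2 - P$1$2" unfolding pp rr pr rp by simp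
  finally show ?thesis using trP trR by simp
qed

definition idem_mat :: "real \<Rightarrow> complex^2^2" where
  "idem_mat X = (\<chi> i j. if i = 1 \<and> j = 1 then 1 else if i = 1 \<and> j = 2 then complex_of_real X else 0)"

lemma idem_mat_12: "idem_mat X $ 1 $ 2 = complex_of_real X"
  by (simp add: idem_mat_def)

lemma idem_mat_idempotent: "idem_mat X ** idem_mat X = idem_mat X"
  by (simp add: vec_eq_iff matrix_matrix_mult_def sum_2 forall_2 idem_mat_def)

lemma idem_mat_entry_sum: "0 \<le> X \<Longrightarrow> (\<Sum>i\<in>UNIV. \<Sum>j\<in>UNIV. cmod (idem_mat X $i$j)) = 1 + X"
  by (simp add: sum_2 idem_mat_def)

section \<open>Point masses\<close>

definition pmass :: "nat \<Rightarrow> nat \<Rightarrow> complex" where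
  "pmass n = (\<lambda>k. if k = n then 1 else 0)"

lemma infsum_indicator_point:
  "infsum (\<lambda>p. if p = q then (1::complex) else 0) S = (if q \<in> S then 1 else 0)"
proof -
  have "infsum (\<lambda>p. if p = q then (1::complex) else 0) S
      = infsum (\<lambda>p. if p = q then (1::complex) else 0) (S \<inter> {q})"
    by (rule infsum_cong_neutral) auto
  then show ?thesis by (cases "q \<in> S") auto
qed

lemma infsum_pmass: "infsum (pmass n) A = (if n \<in> A then 1 else 0)"
  unfolding pmass_def by (rule infsum_indicator_point)

lemma minconv_pmass: "minconv (pmass i) (pmass j) = pmass (min i j)"
proof
  fix k
  have "(\<lambda>(m,n). pmass i m * pmass j n) = (\<lambda>p. if p = (i,j) then (1::complex) else 0)"
    by (auto simp: pmass_def fun_eq_iff)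
  then show "minconv (pmass i) (pmass j) k = pmass (min i j) k"
    by (simp add: minconv_def infsum_indicator_point pmass_def)
qed

lemma pmass_scaled_weighted: "(\<lambda>k. cmod (z * pmass n k) * \<omega> k) = (\<lambda>k. if k = n then cmod z * \<omega> k else 0)"
  by (auto simp: pmass_def fun_eq_iff)

lemma pmass_scaled_l1w: "(\<lambda>k. z * pmass n k) \<in> l1w \<omega>"
  unfolding l1w_def using summable_single[of n "\<lambda>k. cmod z * \<omega> k"]
  by (simp add: pmass_scaled_weighted)

lemma pmass_l1w: "pmass n \<in> l1w \<omega>"
  using pmass_scaled_l1w[of 1 n \<omega>] by simp

lemma pmass_scaled_norm: "l1w_norm \<omega> (\<lambda>k. z * pmass n k) = cmod z * \<omega> n"
  unfolding l1w_norm_def pmass_scaled_weighted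
  using sums_single[of n "\<lambda>k. cmod z * \<omega> k"] by (simp add: sums_iff)

section \<open>Rank-one maps a \<mapsto> c(a) Q\<close>

lemma rank_one_bounded_lin:
  assumes add: "\<And>a b. a \<in> l1w \<omega> \<Longrightarrow> b \<in> l1w \<omega> \<Longrightarrow> c (\<lambda>n. a n + b n) = c a + c b"
    and scale: "\<And>a z. a \<in> l1w \<omega> \<Longrightarrow> c (\<lambda>n. z * a n) = z * c a"
    and bound: "\<And>a. a \<in> l1w \<omega> \<Longrightarrow> cmod (c a) \<le> K * l1w_norm \<omega> a"
  shows "bounded_lin_l1w \<omega> (\<lambda>a. \<chi> i j. c a * Q$i$j)"
  unfolding bounded_lin_l1w_def
proof (intro conjI ballI allI exI)
  fix a assume a: "a \<in> l1w \<omega>"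
  let ?Qs = "\<Sum>i\<in>UNIV. \<Sum>j\<in>UNIV. cmod (Q$i$j)"
  have "m2norm (\<chi> i j. c a * Q$i$j) \<le> cmod (c a) * ?Qs" by (rule m2norm_scaled_le)
  also have "\<dots> \<le> K * l1w_norm \<omega> a * ?Qs"
    using bound[OF a] by (intro mult_right_mono) (auto intro!: sum_nonneg)
  finally show "m2norm (\<chi> i j. c a * Q$i$j) \<le> (K * ?Qs) * l1w_norm \<omega> a"
    by (simp add: algebra_simps)
qed (simp_all add: add scale vec_eq_iff algebra_simps)

lemma rank_one_defect_le:
  fixes Q :: "complex^2^2"
  assumes Q: "Q ** Q = Q"
    and eta: "\<And>a b. a \<in> l1w \<omega> \<Longrightarrow> b \<in> l1w \<omega> \<Longrightarrow> l1w_norm \<omega> a \<le> 1 \<Longrightarrow> l1w_norm \<omega> b \<le> 1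
             \<Longrightarrow> cmod (c (minconv a b) - c a * c b) \<le> \<eta>"
  shows "defect \<omega> (\<lambda>a. \<chi> i j. c a * Q$i$j) \<le> \<eta> * (\<Sum>i\<in>UNIV. \<Sum>j\<in>UNIV. cmod (Q$i$j))"
  unfolding defect_def
proof (rule cSup_least)
  have "(\<lambda>k. 0) \<in> l1w \<omega>" "l1w_norm \<omega> (\<lambda>k. 0) \<le> 1"
    by (simp_all add: l1w_def l1w_norm_def)
  then show "{m2norm ((\<chi> i j. c (minconv a b) * Q$i$j) - (\<chi> i j. c a * Q$i$j) ** (\<chi> i j. c b * Q$i$j))
      | a b. a \<in> l1w \<omega> \<and> b \<in> l1w \<omega> \<and> l1w_norm \<omega> a \<le> 1 \<and> l1w_norm \<omega> b \<le> 1} \<noteq> {}"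
    by fastforce
next
  let ?Qs = "\<Sum>i\<in>UNIV. \<Sum>j\<in>UNIV. cmod (Q$i$j)"
  fix x assume "x \<in> {m2norm ((\<chi> i j. c (minconv a b) * Q$i$j) - (\<chi> i j. c a * Q$i$j) ** (\<chi> i j. c b * Q$i$j))
      | a b. a \<in> l1w \<omega> \<and> b \<in> l1w \<omega> \<and> l1w_norm \<omega> a \<le> 1 \<and> l1w_norm \<omega> b \<le> 1}"
  then obtain a b where
    x: "x = m2norm ((\<chi> i j. c (minconv a b) * Q$i$j) - (\<chi> i j. c a * Q$i$j) ** (\<chi> i j. c b * Q$i$j))"
    and ab: "a \<in> l1w \<omega>" "b \<in> l1w \<omega>" "l1w_norm \<omega> a \<le> 1" "l1w_norm \<omega> b \<le> 1"
    by blast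
  have "(\<chi> i j. c a * Q$i$j) ** (\<chi> i j. c b * Q$i$j) = (\<chi> i j. (c a * c b) * (Q ** Q)$i$j)"
    by (simp add: vec_eq_iff matrix_matrix_mult_def sum_2 algebra_simps)
  then have prod: "(\<chi> i j. c a * Q$i$j) ** (\<chi> i j. c b * Q$i$j) = (\<chi> i j. (c a * c b) * Q$i$j)"
    by (simp only: Q)
  have "(\<chi> i j. c (minconv a b) * Q$i$j) - (\<chi> i j. (c a * c b) * Q$i$j)
      = (\<chi> i j. (c (minconv a b) - c a * c b) * Q$i$j)"
    by (simp add: vec_eq_iff algebra_simps)
  then have "x = m2norm (\<chi> i j. (c (minconv a b) - c a * c b) * Q$i$j)"
    unfolding x prod by simp
  also have "\<dots> \<le> cmod (c (minconv a b) - c a * c b) * ?Qs" by (rule m2norm_scaled_le)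
  also have "\<dots> \<le> \<eta> * ?Qs"
    using eta[OF ab] by (intro mult_right_mono) (auto intro!: sum_nonneg)
  finally show "x \<le> \<eta> * ?Qs" .
qed

text \<open>A weight bounded below by 1.  Then l^1_omega is contained in l^1, so every element is
  absolutely summable and all rearrangements of the convolution below are justified.\<close>
locale weight =
  fixes \<omega> :: "nat \<Rightarrow> real"
  assumes weight_ge_1: "\<And>n. 1 \<le> \<omega> n"
begin

lemma l1w_weighted_nonneg: "0 \<le> cmod (a n) * \<omega> n"
  using weight_ge_1[of n] by simp

lemma l1w_norm_le_weighted: "norm (a n) \<le> cmod (a n) * \<omega> n"
  using weight_ge_1[of n] by (simp add: mult_le_cancel_left1)

lemma l1w_summable_norm:
  assumes "a \<in> l1w \<omega>" shows "summable (\<lambda>n. norm (a n))"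
  by (rule summable_comparison_test'[of "\<lambda>n. cmod (a n) * \<omega> n"])
    (use assms l1w_norm_le_weighted in \<open>auto simp: l1w_def\<close>)

lemma l1w_summable_on:
  assumes "a \<in> l1w \<omega>" shows "a summable_on A"
  using summable_on_subset[OF norm_summable_imp_summable_on[OF l1w_summable_norm[OF assms]]]
  by blast

lemma l1w_norm_summable_on:
  assumes "a \<in> l1w \<omega>" shows "(\<lambda>n. norm (a n)) summable_on A"
proof -
  have "(\<lambda>n. norm (a n)) summable_on UNIV"
    by (rule summable_nonneg_imp_summable_on[OF l1w_summable_norm[OF assms]]) auto
  then show ?thesis by (rule summable_on_subset) auto
qed

lemma l1w_norm_nonneg:
  assumes "a \<in> l1w \<omega>" shows "0 \<le> l1w_norm \<omega> a"
  unfolding l1w_norm_def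
  by (rule suminf_nonneg) (use assms l1w_weighted_nonneg in \<open>auto simp: l1w_def\<close>)

lemma l1w_coeff_le:
  assumes "a \<in> l1w \<omega>" shows "cmod (a n) * \<omega> n \<le> l1w_norm \<omega> a"
proof -
  have "sum (\<lambda>n. cmod (a n) * \<omega> n) {n} \<le> (\<Sum>n. cmod (a n) * \<omega> n)"
    by (rule sum_le_suminf) (use assms l1w_weighted_nonneg in \<open>auto simp: l1w_def\<close>)
  then show ?thesis by (simp add: l1w_norm_def)
qed

lemma l1w_infsum_le:
  assumes a: "a \<in> l1w \<omega>" shows "norm (infsum a A) \<le> l1w_norm \<omega> a"
proof -
  let ?f = "\<lambda>n. cmod (a n) * \<omega> n"
  have hs: "(?f has_sum l1w_norm \<omega> a) UNIV"
    unfolding l1w_norm_def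
    by (rule sums_nonneg_imp_has_sum) (use a l1w_weighted_nonneg in \<open>auto simp: l1w_def summable_sums\<close>)
  have sUNIV: "?f summable_on UNIV" using hs by (rule has_sum_imp_summable)
  have sA: "?f summable_on A" using summable_on_subset[OF sUNIV subset_UNIV] .
  have "norm (infsum a A) \<le> infsum ?f A"
    by (rule norm_infsum_le[OF has_sum_infsum[OF l1w_summable_on[OF a]] has_sum_infsum[OF sA]])
      (rule l1w_norm_le_weighted)
  also have "\<dots> \<le> infsum ?f UNIV"
    by (rule infsum_mono_neutral[OF sA sUNIV]) (auto simp: l1w_weighted_nonneg)
  also have "\<dots> = l1w_norm \<omega> a" using hs by (rule infsumI)
  finally show ?thesis .
qed

lemma l1w_product_summable_on:
  assumes a: "a \<in> l1w \<omega>" and b: "b \<in> l1w \<omega>"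
  shows "(\<lambda>(m,n). a m * b n) summable_on S"
proof -
  have "(\<lambda>(m,n). norm (a m) * norm (b n)) summable_on Sigma UNIV (\<lambda>_. UNIV)"
  proof (rule summable_on_SigmaI)
    fix m :: nat
    show "((\<lambda>n. case (m, n) of (m, n) \<Rightarrow> norm (a m) * norm (b n)) has_sum
          norm (a m) * infsum (\<lambda>n. norm (b n)) UNIV) UNIV"
      using has_sum_cmult_right[OF has_sum_infsum[OF l1w_norm_summable_on[OF b]]] by simp
    show "(\<lambda>m. norm (a m) * infsum (\<lambda>n. norm (b n)) UNIV) summable_on UNIV"
      by (rule summable_on_cmult_left[OF l1w_norm_summable_on[OF a]])
  qed auto
  then have "(\<lambda>p. norm ((\<lambda>(m,n). a m * b n) p)) summable_on UNIV"
    by (simp add: case_prod_unfold norm_mult)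
  then have "(\<lambda>(m,n). a m * b n) summable_on UNIV"
    using summable_on_iff_abs_summable_on_complex by blast
  then show ?thesis by (rule summable_on_subset) auto
qed

section \<open>The convolution of N_min\<close>

text \<open>The N-th coefficient of a * b: the pairs with min m n = N are (N, n) with n \<ge> N
  and (m, N) with m > N.\<close>
lemma minconv_coeff:
  assumes a: "a \<in> l1w \<omega>" and b: "b \<in> l1w \<omega>"
  shows "minconv a b N = a N * infsum b {N..} + infsum a {N<..} * b N"
proof -
  define G where "G = (\<lambda>(m,n). a m * b n)"
  have split: "{(m,n). min m n = N} = (\<lambda>n. (N,n)) ` {N..} \<union> (\<lambda>m. (m,N)) ` {N<..}"
    by (auto simp: image_iff min_def split: if_splits)
  have "minconv a b N = infsum G ((\<lambda>n. (N,n)) ` {N..}) + infsum G ((\<lambda>m. (m,N)) ` {N<..})"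
    unfolding minconv_def G_def[symmetric] split
    by (rule infsum_Un_disjoint) (auto simp: G_def intro!: l1w_product_summable_on[OF a b])
  also have "infsum G ((\<lambda>n. (N,n)) ` {N..}) = infsum (\<lambda>n. a N * b n) {N..}"
    by (subst infsum_reindex) (auto simp: inj_on_def G_def o_def)
  also have "\<dots> = a N * infsum b {N..}"
    by (simp add: infsum_cmult_right l1w_summable_on[OF b])
  also have "infsum G ((\<lambda>m. (m,N)) ` {N<..}) = infsum (\<lambda>m. a m * b N) {N<..}"
    by (subst infsum_reindex) (auto simp: inj_on_def G_def o_def)
  also have "\<dots> = infsum a {N<..} * b N"
    by (simp add: infsum_cmult_left l1w_summable_on[OF a])
  finally show ?thesis .
qed

text \<open>Summing over the tail {k > N} is a character: min m n > N iff m > N and n > N.\<close>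
lemma minconv_tail_sum:
  assumes a: "a \<in> l1w \<omega>" and b: "b \<in> l1w \<omega>"
  shows "infsum (minconv a b) {N<..} = infsum a {N<..} * infsum b {N<..}"
proof -
  define G where "G = (\<lambda>(m::nat,n::nat). a m * b n)"
  define S where "S = Sigma {N<..} (\<lambda>k::nat. {(m::nat,n::nat). min m n = k})"
  have inj: "inj_on snd S" unfolding S_def inj_on_def by auto
  have img: "snd ` S = {N<..} \<times> {N<..}"
  proof
    show "snd ` S \<subseteq> {N<..} \<times> {N<..}" unfolding S_def by auto
    show "{N<..} \<times> {N<..} \<subseteq> snd ` S"
    proof
      fix p assume "p \<in> {N<..} \<times> {N<..}"
      then have "(min (fst p) (snd p), p) \<in> S" unfolding S_def by (auto simp: case_prod_unfold)
      then show "p \<in> snd ` S" by (rule rev_image_eqI) simp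
    qed
  qed
  have sS: "(\<lambda>(k,p). G p) summable_on S"
    using summable_on_reindex[OF inj, of G] l1w_product_summable_on[OF a b, of "snd ` S"]
    by (simp add: G_def o_def case_prod_unfold)
  have "infsum (minconv a b) {N<..} = infsum (\<lambda>k. infsum G {(m,n). min m n = k}) {N<..}"
    unfolding minconv_def G_def by (rule refl)
  also have "\<dots> = infsum (\<lambda>(k,p). G p) S"
    unfolding S_def by (rule infsum_Sigma'_banach) (use sS in \<open>simp only: S_def\<close>)
  also have "\<dots> = infsum G (snd ` S)"
    using infsum_reindex[OF inj, of G] by (simp add: o_def case_prod_unfold)
  also have "\<dots> = infsum (\<lambda>m. infsum (\<lambda>n. a m * b n) {N<..}) {N<..}"
    unfolding img G_def
    by (rule infsum_Sigma'_banach[symmetric]) (rule l1w_product_summable_on[OF a b])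
  also have "\<dots> = infsum a {N<..} * infsum b {N<..}"
    by (simp add: infsum_cmult_right infsum_cmult_left l1w_summable_on[OF a] l1w_summable_on[OF b])
  finally show ?thesis .
qed

end

section \<open>An almost multiplicative functional\<close>

text \<open>c(a) = t a(N) + (sum of a over k > N).  For t = 1 this is the character "sum over k \<ge> N";
  for other t it fails to be multiplicative only through the product a(N) b(N).\<close>
definition almost_char :: "nat \<Rightarrow> real \<Rightarrow> (nat \<Rightarrow> complex) \<Rightarrow> complex" where
  "almost_char N t a = complex_of_real t * a N + infsum a {N<..}"

lemma almost_char_pmass:
  "almost_char N t (pmass n) = (if n = N then complex_of_real t else if N < n then 1 else 0)"
  unfolding almost_char_def infsum_pmass by (simp add: pmass_def)

context weight
begin

lemma almost_char_add:
  assumes "a \<in> l1w \<omega>" "b \<in> l1w \<omega>"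
  shows "almost_char N t (\<lambda>n. a n + b n) = almost_char N t a + almost_char N t b"
  unfolding almost_char_def
  by (simp add: infsum_add[OF l1w_summable_on[OF assms(1)] l1w_summable_on[OF assms(2)]]
      algebra_simps)

lemma almost_char_scale:
  assumes "a \<in> l1w \<omega>"
  shows "almost_char N t (\<lambda>n. z * a n) = z * almost_char N t a"
  unfolding almost_char_def
  by (simp add: infsum_cmult_right[OF l1w_summable_on[OF assms]] algebra_simps)

lemma almost_char_bound:
  assumes a: "a \<in> l1w \<omega>" and t: "0 \<le> t"
  shows "cmod (almost_char N t a) \<le> (t + 1) * l1w_norm \<omega> a"
proof -
  have coeff: "cmod (a N) \<le> l1w_norm \<omega> a"
    using l1w_norm_le_weighted[of a N] l1w_coeff_le[OF a, of N] by simp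
  have "cmod (almost_char N t a) \<le> t * cmod (a N) + norm (infsum a {N<..})"
    unfolding almost_char_def using t norm_triangle_ineq[of "complex_of_real t * a N"]
    by (simp add: norm_mult)
  also have "\<dots> \<le> t * l1w_norm \<omega> a + l1w_norm \<omega> a"
    using coeff l1w_infsum_le[OF a] t by (intro add_mono mult_left_mono) auto
  finally show ?thesis by (simp add: algebra_simps)
qed

lemma almost_char_defect:
  assumes a: "a \<in> l1w \<omega>" and b: "b \<in> l1w \<omega>"
  shows "almost_char N t (minconv a b) - almost_char N t a * almost_char N t b
       = complex_of_real (t - t * t) * (a N * b N)"
proof -
  have "{N..} = insert N {N<..}" by auto
  then have "infsum b {N..} = b N + infsum b {N<..}"
    by (simp add: infsum_insert l1w_summable_on[OF b])
  then show ?thesis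
    unfolding almost_char_def minconv_coeff[OF a b] minconv_tail_sum[OF a b]
    by (simp add: algebra_simps)
qed

text \<open>On the unit ball |a(N)| \<le> 1 / omega N, so for 0 < t \<le> 1 the defect is at most
  t / (omega N)^2: small when omega N is large.\<close>
lemma almost_char_defect_le:
  assumes t0: "0 < t" and t1: "t \<le> 1"
    and a: "a \<in> l1w \<omega>" "l1w_norm \<omega> a \<le> 1" and b: "b \<in> l1w \<omega>" "l1w_norm \<omega> b \<le> 1"
  shows "cmod (almost_char N t (minconv a b) - almost_char N t a * almost_char N t b)
       \<le> t / (\<omega> N)\<^sup>2"
proof -
  have coeff: "cmod (x N) \<le> 1 / \<omega> N" if "x \<in> l1w \<omega>" "l1w_norm \<omega> x \<le> 1" for x
    using l1w_coeff_le[OF that(1), of N] that(2) weight_ge_1[of N] by (simp add: field_simps)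
  have tt: "\<bar>t - t * t\<bar> \<le> t" using t0 t1 by (simp add: abs_if mult_le_cancel_left1)
  have ab: "cmod (a N) * cmod (b N) \<le> 1 / \<omega> N * (1 / \<omega> N)"
    using coeff[OF a] coeff[OF b] weight_ge_1[of N] by (intro mult_mono) auto
  have "\<bar>t - t * t\<bar> * (cmod (a N) * cmod (b N)) \<le> t * (1 / \<omega> N * (1 / \<omega> N))"
    using mult_mono[OF tt ab] t0 by simp
  then show ?thesis
    unfolding almost_char_defect[OF a(1) b(1)] norm_mult norm_of_real
    by (simp add: power2_eq_square)
qed

lemma op_norm_diff_bdd_above:
  assumes T: "bounded_lin_l1w \<omega> T" and S: "bounded_lin_l1w \<omega> S"
  shows "bdd_above {m2norm (T a - S a) | a. a \<in> l1w \<omega> \<and> l1w_norm \<omega> a \<le> 1}"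
proof -
  obtain KT KS where KT: "\<forall>a\<in>l1w \<omega>. m2norm (T a) \<le> KT * l1w_norm \<omega> a"
    and KS: "\<forall>a\<in>l1w \<omega>. m2norm (S a) \<le> KS * l1w_norm \<omega> a"
    using T S unfolding bounded_lin_l1w_def by blast
  have unit: "K * l1w_norm \<omega> a \<le> \<bar>K\<bar>" if "a \<in> l1w \<omega>" "l1w_norm \<omega> a \<le> 1" for K a
  proof -
    have "K * l1w_norm \<omega> a \<le> \<bar>K\<bar> * l1w_norm \<omega> a"
      using l1w_norm_nonneg[OF that(1)] by (intro mult_right_mono) auto
    also have "\<dots> \<le> \<bar>K\<bar>" using that(2) by (simp add: mult_left_le)
    finally show ?thesis .
  qed
  show ?thesis
  proof (rule bdd_aboveI)
    fix x assume "x \<in> {m2norm (T a - S a) | a. a \<in> l1w \<omega> \<and> l1w_norm \<omega> a \<le> 1}"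
    then obtain a where x: "x = m2norm (T a - S a)" and a: "a \<in> l1w \<omega>" "l1w_norm \<omega> a \<le> 1"
      by blast
    show "x \<le> \<bar>KT\<bar> + \<bar>KS\<bar>"
      using m2norm_diff_le[of "T a" "S a"] KT KS unit[OF a, of KT] unit[OF a, of KS] a x
      by fastforce
  qed
qed

text \<open>Testing T - S on the normalised point mass delta_n / omega n bounds every entry of
  T(delta_n) - S(delta_n) by the operator norm of T - S times omega n.\<close>
lemma op_norm_diff_pmass_entry:
  assumes T: "bounded_lin_l1w \<omega> T" and S: "bounded_lin_l1w \<omega> S"
  shows "cmod ((T (pmass n) - S (pmass n)) $ i $ j) \<le> op_norm_l1w \<omega> (\<lambda>a. T a - S a) * \<omega> n"
proof -
  define e where "e = (\<lambda>k. complex_of_real (1 / \<omega> n) * pmass n k)"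
  have e1: "e \<in> l1w \<omega>" unfolding e_def by (rule pmass_scaled_l1w)
  have e2: "l1w_norm \<omega> e \<le> 1"
    unfolding e_def pmass_scaled_norm using weight_ge_1[of n] by (simp add: norm_divide)
  have scale: "\<And>U. bounded_lin_l1w \<omega> U \<Longrightarrow> U e = (\<chi> i j. complex_of_real (1 / \<omega> n) * U (pmass n) $ i $ j)"
    unfolding e_def bounded_lin_l1w_def using pmass_l1w by blast
  have "(T e - S e) $ i $ j = complex_of_real (1 / \<omega> n) * (T (pmass n) - S (pmass n)) $ i $ j"
    by (simp add: scale[OF T] scale[OF S] right_diff_distrib)
  then have "cmod ((T (pmass n) - S (pmass n)) $ i $ j) / \<omega> n = cmod ((T e - S e) $ i $ j)"
    using weight_ge_1[of n] by (simp only: norm_mult norm_of_real) simp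
  also have "\<dots> \<le> m2norm (T e - S e)" by (rule m2norm_entry_le)
  also have "\<dots> \<le> op_norm_l1w \<omega> (\<lambda>a. T a - S a)"
    unfolding op_norm_l1w_def
    by (rule cSup_upper[OF _ op_norm_diff_bdd_above[OF T S]]) (use e1 e2 in blast)
  finally show ?thesis using weight_ge_1[of n] by (simp add: field_simps)
qed

lemma zero_in_Mult: "(\<lambda>a. 0) \<in> Mult_l1w \<omega>"
  unfolding Mult_l1w_def bounded_lin_l1w_def
proof (intro CollectI conjI ballI allI exI)
  fix a :: "nat \<Rightarrow> complex"
  show "m2norm (0::complex^2^2) \<le> 0 * l1w_norm \<omega> a"
    using m2norm_le_entry_sum[of "0::complex^2^2"] by simp
qed (simp_all add: vec_eq_iff)

text \<open>A multiplicative map sends delta_m, delta_n (m \<le> n) to idempotents P, R with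
  P R = R P = P; hence their (1,2)-entries agree when both are nonzero.\<close>
lemma Mult_pmass_offdiag_eq:
  assumes S: "S \<in> Mult_l1w \<omega>" and mn: "m \<le> n"
    and P12: "S (pmass m) $ 1 $ 2 \<noteq> 0" and R12: "S (pmass n) $ 1 $ 2 \<noteq> 0"
  shows "S (pmass m) $ 1 $ 2 = S (pmass n) $ 1 $ 2"
proof -
  have mult: "S (pmass (min i j)) = S (pmass i) ** S (pmass j)" for i j
  proof -
    have "S (minconv (pmass i) (pmass j)) = S (pmass i) ** S (pmass j)"
      using S pmass_l1w[of _ \<omega>] unfolding Mult_l1w_def by blast
    then show ?thesis by (simp add: minconv_pmass)
  qed
  have "S (pmass m) ** S (pmass m) = S (pmass m)" "S (pmass n) ** S (pmass n) = S (pmass n)"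
    "S (pmass m) ** S (pmass n) = S (pmass m)" "S (pmass n) ** S (pmass m) = S (pmass m)"
    using mult[of m m] mult[of n n] mult[of m n] mult[of n m] mn
    by (simp_all add: min.absorb1 min.absorb2)
  then show ?thesis by (rule idempotents_offdiag_eq[OF _ _ _ _ P12 R12])
qed

text \<open>If the (1,2)-entries alpha, beta of T at delta_m,
  delta_n are large compared to r omega m, r omega n and far apart, then every multiplicative
  S has ||T - S|| \<ge> r: otherwise the (1,2)-entries of S at delta_m, delta_n would be nonzero,
  hence equal, and too close to both alpha and beta.\<close>
lemma dist_Mult_lower_bound:
  assumes T: "bounded_lin_l1w \<omega> T" and mn: "m \<le> n"
    and alpha: "T (pmass m) $ 1 $ 2 = \<alpha>" "r * \<omega> m \<le> cmod \<alpha>"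
    and beta: "T (pmass n) $ 1 $ 2 = \<beta>" "r * \<omega> n \<le> cmod \<beta>"
    and apart: "r * (\<omega> m + \<omega> n) \<le> cmod (\<alpha> - \<beta>)"
  shows "r \<le> dist_Mult \<omega> T"
  unfolding dist_Mult_def
proof (rule cInf_greatest)
  show "{op_norm_l1w \<omega> (\<lambda>a. T a - S a) |S. S \<in> Mult_l1w \<omega>} \<noteq> {}"
    using zero_in_Mult by blast
next
  fix x assume "x \<in> {op_norm_l1w \<omega> (\<lambda>a. T a - S a) |S. S \<in> Mult_l1w \<omega>}"
  then obtain S where S: "S \<in> Mult_l1w \<omega>" and x: "x = op_norm_l1w \<omega> (\<lambda>a. T a - S a)" by blast
  show "r \<le> x"
  proof (rule ccontr)
    assume "\<not> r \<le> x"
    have close: "cmod (T (pmass k) $ 1 $ 2 - S (pmass k) $ 1 $ 2) < r * \<omega> k" for k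
    proof -
      have "bounded_lin_l1w \<omega> S" using S by (simp add: Mult_l1w_def)
      then have "cmod (T (pmass k) $ 1 $ 2 - S (pmass k) $ 1 $ 2) \<le> x * \<omega> k"
        using op_norm_diff_pmass_entry[OF T, of S k 1 2] x by simp
      also have "\<dots> < r * \<omega> k" using \<open>\<not> r \<le> x\<close> weight_ge_1[of k] by simp
      finally show ?thesis .
    qed
    have "S (pmass m) $ 1 $ 2 \<noteq> 0" "S (pmass n) $ 1 $ 2 \<noteq> 0"
      using close[of m] close[of n] alpha beta by auto
    then have eq: "S (pmass m) $ 1 $ 2 = S (pmass n) $ 1 $ 2"
      by (rule Mult_pmass_offdiag_eq[OF S mn])
    have "cmod (\<alpha> - \<beta>) \<le> cmod (\<alpha> - S (pmass m) $ 1 $ 2) + cmod (\<beta> - S (pmass n) $ 1 $ 2)"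
      using eq norm_triangle_ineq4[of "\<alpha> - S (pmass m) $ 1 $ 2" "\<beta> - S (pmass n) $ 1 $ 2"]
      by simp
    also have "\<dots> < r * (\<omega> m + \<omega> n)"
      using close[of m] close[of n] alpha beta by (simp add: algebra_simps)
    finally show False using apart by simp
  qed
qed

section \<open>The counterexample maps\<close>

lemma counterexample_map:
  obtains T where "bounded_lin_l1w \<omega> T" "defect \<omega> T \<le> 4 / \<omega> N" "2 \<le> dist_Mult \<omega> T"
proof -
  define W where "W = \<omega> N"
  define X where "X = 4 * (W + \<omega> (Suc N))"
  define t where "t = 2 * W / X"
  define T where "T a = (\<chi> i j. almost_char N t a * idem_mat X $i$j)" for a
  have W1: "1 \<le> W" and w1: "1 \<le> \<omega> (Suc N)" using weight_ge_1 by (auto simp: W_def)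
  have X1: "1 \<le> X" using W1 w1 by (simp add: X_def)
  have t0: "0 < t" and t1: "t \<le> 1" using W1 w1 by (auto simp: t_def X_def field_simps)
  have tX: "t * X = 2 * W" using X1 by (simp add: t_def)
  have BL: "bounded_lin_l1w \<omega> T"
    unfolding T_def using t0
    by (intro rank_one_bounded_lin[where K = "t + 1"])
      (auto simp: almost_char_add almost_char_scale almost_char_bound)
  have "defect \<omega> T \<le> t / W\<^sup>2 * (\<Sum>i\<in>UNIV. \<Sum>j\<in>UNIV. cmod (idem_mat X $i$j))"
    unfolding T_def W_def
    by (rule rank_one_defect_le[OF idem_mat_idempotent almost_char_defect_le[OF t0 t1]])
  also have "\<dots> = t / W\<^sup>2 * (1 + X)"
    using idem_mat_entry_sum[of X] X1 by simp
  also have "\<dots> = 2 * (1 + X) / X / W"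
    using X1 W1 by (simp add: t_def power2_eq_square field_simps)
  also have "\<dots> \<le> 4 / W"
    using X1 W1 by (intro divide_right_mono) (auto simp: field_simps)
  finally have DEF: "defect \<omega> T \<le> 4 / \<omega> N" by (simp add: W_def)
  have "2 \<le> dist_Mult \<omega> T"
  proof (rule dist_Mult_lower_bound[OF BL le_SucI[OF order_refl]])
    show "T (pmass N) $ 1 $ 2 = complex_of_real (2 * W)"
      by (simp add: T_def almost_char_pmass idem_mat_12 tX[symmetric])
    show "T (pmass (Suc N)) $ 1 $ 2 = complex_of_real X"
      by (simp add: T_def almost_char_pmass idem_mat_12)
    show "2 * \<omega> N \<le> cmod (complex_of_real (2 * W))" using W1 by (simp add: W_def)
    show "2 * \<omega> (Suc N) \<le> cmod (complex_of_real X)"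
      using W1 w1 by (simp only: norm_of_real) (simp add: X_def)
    have "cmod (complex_of_real (2 * W) - complex_of_real X) = \<bar>2 * W - X\<bar>"
      by (simp only: of_real_diff[symmetric] norm_of_real)
    then show "2 * (\<omega> N + \<omega> (Suc N)) \<le> cmod (complex_of_real (2 * W) - complex_of_real X)"
      using W1 w1 by (simp add: W_def X_def)
  qed
  with BL DEF show ?thesis by (rule that)
qed

end

theorem theoremt:
  fixes \<omega> :: "nat \<Rightarrow> real"
  assumes "\<And>n. \<omega> n \<ge> 1"
    and "\<not> bdd_above (range \<omega>)"
  shows "\<not> uniformly_AMNM_l1w_M2 \<omega>"
proof
  assume "uniformly_AMNM_l1w_M2 \<omega>"
  then obtain \<delta> where "\<delta> > 0"
    and AMNM: "\<And>T. bounded_lin_l1w \<omega> T \<and> defect \<omega> T \<le> \<delta> \<longrightarrow> dist_Mult \<omega> T \<le> 1"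
    unfolding uniformly_AMNM_l1w_M2_def by (meson zero_less_one)
  obtain N where N: "4 / \<delta> < \<omega> N"
    using assms(2) by (meson bdd_aboveI2 not_le rangeI)
  then have small: "4 / \<omega> N \<le> \<delta>"
    using \<open>\<delta> > 0\<close> assms(1)[of N] by (simp add: field_simps)
  interpret weight \<omega> using assms(1) by unfold_locales
  obtain T where "bounded_lin_l1w \<omega> T" "defect \<omega> T \<le> 4 / \<omega> N" "2 \<le> dist_Mult \<omega> T"
    using counterexample_map .
  with small AMNM[of T] show False by linarith
qed

end
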